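(* Let $E_1,\dots,E_{N_B}$ be real numbers linearly independent over $\mathbb Q$, $d_1,\dots,d_{N_B}>0$, $\chi(t)=\sum_{j=1}^{N_B}d_je^{-itE_j}$ and $I_k=\overline{|\chi(t)|^{2k}}$ ($I_0=1$). Then for every complex $z$, $$\sum_{k=0}^\infty\frac{I_k}{(k!)^2}z^k=\overline{I_0\big(2|\chi(t)|\sqrt z\big)}=\prod_{i=1}^{N_B}I_0\big(2d_i\sqrt z\big),$$ where $I_0$ is the modified Bessel function of the first kind. In particular, the quantities $I_k/k!$ are the moments of a sequence whose cumulants are $a_nX_n$, with $a_n$ defined by $\ln I_0(2\sqrt z)=\sum_{n\ge1}a_nz^n/n!$ and $X_n=\sum_{i=1}^{N_B}d_i^{2n}$.
   Context: $\overline{f(t)}:=\lim_{T\to\infty}\frac1T\int_0^Tf(t)\,dt$. Note $I_0(2\sqrt z)=\sum_{n\ge0}z^n/(n!)^2$ is entire in $z$. *)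

theory Defs
  imports "HOL-Analysis.Analysis" "HOL-Computational_Algebra.Formal_Power_Series"
begin

definition avg_T :: "(real \<Rightarrow> 'a::real_normed_vector) \<Rightarrow> real \<Rightarrow> 'a" where
  "avg_T f T = (1 / T) *\<^sub>R integral {0..T} f"

definition time_avg :: "(real \<Rightarrow> 'a::real_normed_vector) \<Rightarrow> 'a" where
  "time_avg f = Lim at_top (avg_T f)"

text \<open>I0s w = sum_n w^n/(n!)^2, i.e. I0s w = I_0(2 sqrt w) (entire in w).\<close>
definition I0s :: "complex \<Rightarrow> complex" where
  "I0s w = (\<Sum>n. w ^ n / (of_nat (fact n))\<^sup>2)"

definition chi :: "nat \<Rightarrow> (nat \<Rightarrow> real) \<Rightarrow> (nat \<Rightarrow> real) \<Rightarrow> real \<Rightarrow> complex" where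
  "chi N d E t = (\<Sum>j<N. complex_of_real (d j) * exp (- \<i> * complex_of_real (t * E j)))"

text \<open>Formal logarithm of a power series with constant term 1: ln(1 + (M - 1)).\<close>
definition fps_log :: "real fps \<Rightarrow> real fps" where
  "fps_log M = fps_compose (fps_ln 1) (M - 1)"

text \<open>Cumulants of a moment sequence m (with m 0 = 1): the cumulant generating function
  sum_n kappa_n z^n/n! is the (formal) logarithm of the moment generating function sum_k m_k z^k/k!.\<close>
definition cumulant :: "(nat \<Rightarrow> real) \<Rightarrow> nat \<Rightarrow> real" where
  "cumulant m n = fact n * fps_nth (fps_log (Abs_fps (\<lambda>k. m k / fact k))) n"

text \<open>a_n defined by ln I_0(2 sqrt z) = sum_{n>=1} a_n z^n/n!, where I_0(2 sqrt z) = sum_k z^k/(k!)^2.\<close>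
definition a_coef :: "nat \<Rightarrow> real" where
  "a_coef n = fact n * fps_nth (fps_log (Abs_fps (\<lambda>k. 1 / (fact k)\<^sup>2))) n"

end

theory Submission
  imports Defs
begin

text \<open>
  Let chi_n be the sum over the first n frequencies. Expanding
  chi_n^p * conj(chi_n)^q * exp(i w t) binomially in the last summand d_n exp(-i t E_n) only shifts
  w by integer multiples of E_n, so by induction on n the time average of such a term vanishes
  unless w lies in the rational span of E_0, ..., E_(n-1). By rational independence, in the
  expansion of |chi_(n+1)|^(2k) only the terms with as many factors exp(-i t E_n) as conjugate
  factors survive, which gives I_k(n+1) = sum_p (k choose p)^2 d_n^(2(k-p)) I_p(n). This is a
  Cauchy product: with each new frequency the series sum_k I_k z^k/(k!)^2 gets multiplied by
  I_0(2 d_n sqrt z). Averaging the Bessel series of |chi| term by term is justified because it is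
  dominated uniformly in t, and the cumulants are the coefficients of the logarithm of the
  product, each factor being I_0(2 sqrt z) rescaled to d_i^2 z.
\<close>

section \<open>Time averages\<close>

lemma avg_T_sum:
  fixes f :: "'i \<Rightarrow> real \<Rightarrow> 'a::banach"
  assumes "finite F" "\<And>i. i \<in> F \<Longrightarrow> continuous_on UNIV (f i)"
  shows "avg_T (\<lambda>t. \<Sum>i\<in>F. f i t) T = (\<Sum>i\<in>F. avg_T (f i) T)"
  unfolding avg_T_def using assms
  by (subst integral_sum) (auto intro!: integrable_continuous_real continuous_on_subset[OF assms(2)]
      simp: scaleR_sum_right)

lemma avg_T_diff:
  fixes f g :: "real \<Rightarrow> 'a::banach"
  assumes "continuous_on UNIV f" "continuous_on UNIV g"
  shows "avg_T (\<lambda>t. f t - g t) T = avg_T f T - avg_T g T"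
  unfolding avg_T_def
  by (subst integral_diff)
     (auto intro!: integrable_continuous_real continuous_on_subset[OF assms(1)]
        continuous_on_subset[OF assms(2)] simp: scaleR_diff_right)

lemma avg_T_mult_left:
  fixes f :: "real \<Rightarrow> 'a::real_normed_field"
  shows "avg_T (\<lambda>t. c * f t) T = c * avg_T f T"
  unfolding avg_T_def by (simp add: integral_mult_right)

lemma avg_T_of_real:
  assumes "continuous_on UNIV f"
  shows "avg_T (\<lambda>t. of_real (f t) :: 'a::{real_normed_algebra_1,banach}) T = of_real (avg_T f T)"
proof -
  have "integral {0..T} (of_real \<circ> f) = (of_real (integral {0..T} f) :: 'a)"
    by (intro integral_linear integrable_continuous_real continuous_on_subset[OF assms]
        bounded_linear_of_real) simp
  then show ?thesis
    unfolding avg_T_def by (simp add: o_def scaleR_conv_of_real flip: of_real_mult)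
qed

lemma tendsto_avg_T_const: "(avg_T (\<lambda>t. c) \<longlongrightarrow> c) at_top"
proof (rule tendsto_eventually)
  show "\<forall>\<^sub>F T in at_top. avg_T (\<lambda>t. c) T = c"
    using eventually_gt_at_top[of 0] by eventually_elim (simp add: avg_T_def)
qed

lemma norm_avg_T_le:
  fixes f :: "real \<Rightarrow> 'a::banach"
  assumes "continuous_on UNIV f" "\<And>t. norm (f t) \<le> B" "T > 0"
  shows "norm (avg_T f T) \<le> B"
proof -
  have "0 \<le> B"
    using norm_ge_zero assms(2) order_trans by blast
  moreover have "(f has_integral integral {0..T} f) {0..T}"
    by (intro integrable_integral integrable_continuous_real continuous_on_subset[OF assms(1)]) simp
  ultimately have "norm (integral {0..T} f) \<le> B * T"
    using has_integral_bound_real[of B "{}" f _ 0 T] assms(2,3) by simp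
  with \<open>T > 0\<close> show ?thesis
    unfolding avg_T_def by (simp add: field_simps)
qed

lemma norm_le_if_tendsto_avg_T:
  fixes f :: "real \<Rightarrow> 'a::banach"
  assumes "(avg_T f \<longlongrightarrow> L) at_top" "continuous_on UNIV f" "\<And>t. norm (f t) \<le> B"
  shows "norm L \<le> B"
proof (rule Lim_norm_ubound[OF trivial_limit_at_top_linorder assms(1)])
  show "\<forall>\<^sub>F T in at_top. norm (avg_T f T) \<le> B"
    using eventually_gt_at_top[of 0] by eventually_elim (rule norm_avg_T_le[OF assms(2,3)])
qed

lemma uniform_limit_avg_T:
  fixes f :: "'i \<Rightarrow> real \<Rightarrow> 'a::banach"
  assumes lim: "uniform_limit UNIV f h F"
    and cont: "\<forall>\<^sub>F i in F. continuous_on UNIV (f i)" "continuous_on UNIV h"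
  shows "uniform_limit {0<..} (\<lambda>i. avg_T (f i)) (avg_T h) F"
proof (rule uniform_limitI)
  fix e :: real
  assume "e > 0"
  then have "\<forall>\<^sub>F i in F. \<forall>t. dist (f i t) (h t) < e / 2"
    using uniform_limitD[OF lim, of "e / 2"] by simp
  with cont(1) show "\<forall>\<^sub>F i in F. \<forall>T\<in>{0<..}. dist (avg_T (f i) T) (avg_T h T) < e"
  proof eventually_elim
    case (elim i)
    show ?case
    proof
      fix T :: real
      assume "T \<in> {0<..}"
      then have "norm (avg_T (\<lambda>t. f i t - h t) T) \<le> e / 2"
        using elim by (intro norm_avg_T_le continuous_on_diff cont(2))
          (auto simp: dist_norm less_imp_le)
      with \<open>e > 0\<close> show "dist (avg_T (f i) T) (avg_T h T) < e"
        using avg_T_diff[OF elim(1) cont(2)] by (simp add: dist_norm)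
    qed
  qed
qed

lemma tendsto_avg_T_suminf:
  fixes u :: "nat \<Rightarrow> real \<Rightarrow> 'a::banach"
  assumes cont: "\<And>k. continuous_on UNIV (u k)"
    and bound: "\<And>k t. norm (u k t) \<le> r k" and "summable r"
    and lim: "\<And>k. (avg_T (u k) \<longlongrightarrow> b k) at_top"
  shows "(avg_T (\<lambda>t. \<Sum>k. u k t) \<longlongrightarrow> (\<Sum>k. b k)) at_top"
proof -
  have "norm (b k) \<le> r k" for k
    by (rule norm_le_if_tendsto_avg_T[OF lim cont bound])
  then have "summable b"
    by (intro summable_comparison_test'[OF \<open>summable r\<close>])
  have partial: "uniform_limit UNIV (\<lambda>M t. \<Sum>k<M. u k t) (\<lambda>t. \<Sum>k. u k t) sequentially"
    by (rule Weierstrass_m_test) (use bound \<open>summable r\<close> in auto)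
  have cont_partial: "continuous_on UNIV (\<lambda>t. \<Sum>k<M. u k t)" for M
    by (intro continuous_on_sum cont)
  have "continuous_on UNIV (\<lambda>t. \<Sum>k. u k t)"
    by (intro uniform_limit_theorem[OF _ partial] always_eventually allI cont_partial) simp
  then have uniform: "uniform_limit {0<..} (\<lambda>M. avg_T (\<lambda>t. \<Sum>k<M. u k t))
      (avg_T (\<lambda>t. \<Sum>k. u k t)) sequentially"
    by (intro uniform_limit_avg_T[OF partial] always_eventually allI cont_partial)
  have "(avg_T (\<lambda>t. \<Sum>k<M. u k t) \<longlongrightarrow> (\<Sum>k<M. b k)) at_top" for M
  proof -
    have "avg_T (\<lambda>t. \<Sum>k<M. u k t) = (\<lambda>T. \<Sum>k<M. avg_T (u k) T)"
      by (simp add: fun_eq_iff avg_T_sum cont)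
    then show ?thesis
      by (simp add: tendsto_sum lim)
  qed
  then show ?thesis
    using summable_LIMSEQ[OF \<open>summable b\<close>] uniform
    by (rule swap_uniform_limit'[OF always_eventually[OF allI]])
       (simp_all add: eventually_gt_at_top)
qed

section \<open>Phases\<close>

definition phase :: "real \<Rightarrow> real \<Rightarrow> complex" where
  "phase \<omega> t = exp (\<i> * complex_of_real (t * \<omega>))"

lemma phase_zero [simp]: "phase 0 = (\<lambda>t. 1)"
  by (simp add: phase_def fun_eq_iff)

lemma norm_phase [simp]: "norm (phase \<omega> t) = 1"
  by (simp add: phase_def)

lemma phase_add: "phase \<alpha> t * phase \<beta> t = phase (\<alpha> + \<beta>) t"
  by (simp add: phase_def distrib_left distrib_right flip: exp_add)

lemma phase_power: "phase \<omega> t ^ m = phase (real m * \<omega>) t"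
  by (simp add: phase_def mult_ac flip: exp_of_nat_mult)

lemma cnj_phase: "cnj (phase \<omega> t) = phase (- \<omega>) t"
  by (simp add: phase_def exp_cnj)

lemma continuous_on_phase [continuous_intros]: "continuous_on UNIV (phase \<omega>)"
  unfolding phase_def by (intro continuous_intros)

lemma tendsto_avg_T_phase:
  "(avg_T (phase \<omega>) \<longlongrightarrow> (if \<omega> = 0 then 1 else 0)) at_top"
proof (cases "\<omega> = 0")
  case True
  then show ?thesis
    by (simp add: tendsto_avg_T_const)
next
  case False
  define F where "F t = phase \<omega> t / (\<i> * complex_of_real \<omega>)" for t
  have derivative: "(F has_vector_derivative phase \<omega> t) (at t within {0..T})" for t T
  proof -
    have "((\<lambda>w. exp (w * (\<i> * complex_of_real \<omega>)) / (\<i> * complex_of_real \<omega>)) has_field_derivative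
        exp (complex_of_real t * (\<i> * complex_of_real \<omega>))) (at (complex_of_real t))"
      using False by (auto intro!: derivative_eq_intros)
    from has_vector_derivative_real_field[OF this] show ?thesis
      unfolding F_def phase_def by (simp add: mult_ac)
  qed
  have integral: "integral {0..T} (phase \<omega>) = F T - F 0" if "T \<ge> 0" for T
    by (intro integral_unique fundamental_theorem_of_calculus[OF that] derivative)
  have "norm (avg_T (phase \<omega>) T) \<le> (2 / \<bar>\<omega>\<bar>) / T" if "T > 0" for T
  proof -
    have "norm (F T - F 0) \<le> 2 / \<bar>\<omega>\<bar>"
      using norm_triangle_ineq4[of "F T" "F 0"] by (simp add: F_def norm_divide norm_mult)
    then have "norm (F T - F 0) / T \<le> (2 / \<bar>\<omega>\<bar>) / T"
      using that by (intro divide_right_mono) auto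
    with that show ?thesis
      by (simp add: avg_T_def integral)
  qed
  then have "\<forall>\<^sub>F T in at_top. norm (avg_T (phase \<omega>) T) \<le> (2 / \<bar>\<omega>\<bar>) / T"
    by (intro eventually_mono[OF eventually_gt_at_top[of 0]])
  moreover have "((\<lambda>T. (2 / \<bar>\<omega>\<bar>) / T) \<longlongrightarrow> 0) at_top"
    by (intro tendsto_divide_0[OF tendsto_const] filterlim_at_top_imp_at_infinity filterlim_ident)
  ultimately show ?thesis
    using False by (simp add: Lim_null_comparison)
qed

lemma chi_eq_sum_phase: "chi n d E t = (\<Sum>j<n. complex_of_real (d j) * phase (- E j) t)"
  by (simp add: chi_def phase_def)

lemma chi_0 [simp]: "chi 0 d E t = 0"
  by (simp add: chi_def)

lemma chi_Suc: "chi (Suc n) d E t = chi n d E t + complex_of_real (d n) * phase (- E n) t"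
  by (simp add: chi_eq_sum_phase)

lemma norm_chi_le: "norm (chi n d E t) \<le> (\<Sum>j<n. \<bar>d j\<bar>)"
  unfolding chi_eq_sum_phase
  by (rule order_trans[OF norm_sum]) (simp add: norm_mult)

lemma continuous_on_chi [continuous_intros]: "continuous_on UNIV (chi n d E)"
  unfolding chi_eq_sum_phase by (intro continuous_intros)

section \<open>Rational spans\<close>

definition rat_span :: "(nat \<Rightarrow> real) \<Rightarrow> nat \<Rightarrow> real set" where
  "rat_span E n = {\<Sum>j<n. of_rat (q j) * E j | q. True}"

lemma rat_span_0 [simp]: "rat_span E 0 = {0}"
  by (simp add: rat_span_def)

lemma rat_span_SucI:
  assumes "r \<in> \<rat>" "\<omega> + r * E n \<in> rat_span E n"
  shows "\<omega> \<in> rat_span E (Suc n)"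
proof -
  obtain s where s: "r = of_rat s"
    using assms(1) by (auto elim: Rats_cases)
  obtain q where q: "\<omega> + r * E n = (\<Sum>j<n. of_rat (q j) * E j)"
    using assms(2) by (auto simp: rat_span_def)
  have "\<omega> = (\<Sum>j<Suc n. of_rat ((q(n := - s)) j) * E j)"
    using q by (simp add: s of_rat_minus algebra_simps)
  then show ?thesis
    unfolding rat_span_def by blast
qed

definition rat_independent :: "nat \<Rightarrow> (nat \<Rightarrow> real) \<Rightarrow> bool" where
  "rat_independent n E \<longleftrightarrow> (\<forall>q :: nat \<Rightarrow> rat. (\<Sum>j<n. of_rat (q j) * E j) = 0 \<longrightarrow> (\<forall>j<n. q j = 0))"

lemma rat_independent_SucD:
  assumes "rat_independent (Suc n) E"
  shows "rat_independent n E"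
  unfolding rat_independent_def
proof (intro allI impI)
  fix q :: "nat \<Rightarrow> rat" and j
  assume "(\<Sum>j<n. of_rat (q j) * E j) = 0" "j < n"
  then have "(\<Sum>j<Suc n. of_rat ((q(n := 0)) j) * E j) = 0"
    by simp
  with assms \<open>j < n\<close> show "q j = 0"
    unfolding rat_independent_def by (metis fun_upd_other less_Suc_eq less_irrefl)
qed

lemma rat_independent_not_in_rat_span:
  assumes "rat_independent (Suc n) E" "r \<in> \<rat>" "r \<noteq> 0"
  shows "r * E n \<notin> rat_span E n"
proof
  obtain s where s: "r = of_rat s"
    using assms(2) by (auto elim: Rats_cases)
  assume "r * E n \<in> rat_span E n"
  then obtain q where "r * E n = (\<Sum>j<n. of_rat (q j) * E j)"
    by (auto simp: rat_span_def)
  then have "(\<Sum>j<Suc n. of_rat ((q(n := - s)) j) * E j) = 0"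
    by (simp add: s of_rat_minus)
  then have "s = 0"
    using assms(1) unfolding rat_independent_def by fastforce
  with s \<open>r \<noteq> 0\<close> show False
    by simp
qed

section \<open>The moments\<close>

definition bessel_fps :: "real \<Rightarrow> real fps" where
  "bessel_fps c = Abs_fps (\<lambda>k. c ^ k / (fact k)\<^sup>2)"

lemma fps_nth_bessel_fps [simp]: "fps_nth (bessel_fps c) k = c ^ k / (fact k)\<^sup>2"
  by (simp add: bessel_fps_def)

lemma fps_nth_prod_0: "fps_nth (\<Prod>i\<in>A. F i) 0 = (\<Prod>i\<in>A. fps_nth (F i) 0)"
  by (induction A rule: infinite_finite_induct) auto

text \<open>The moments are defined through the product formula; \<open>chi_moment_Suc\<close> recovers
  the recursion that the time averages satisfy.\<close>

definition chi_moment :: "(nat \<Rightarrow> real) \<Rightarrow> nat \<Rightarrow> nat \<Rightarrow> real" where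
  "chi_moment d n k = (fact k)\<^sup>2 * fps_nth (\<Prod>i<n. bessel_fps ((d i)\<^sup>2)) k"

lemma chi_moment_0: "chi_moment d 0 k = (if k = 0 then 1 else 0)"
  by (simp add: chi_moment_def)

lemma chi_moment_n_0 [simp]: "chi_moment d n 0 = 1"
  by (simp add: chi_moment_def fps_nth_prod_0)

lemma chi_moment_Suc:
  "chi_moment d (Suc n) k = (\<Sum>p\<le>k. real (k choose p) ^ 2 * d n ^ (2 * (k - p)) * chi_moment d n p)"
proof -
  define P where "P = (\<Prod>i<n. bessel_fps ((d i)\<^sup>2))"
  have "chi_moment d (Suc n) k = (\<Sum>p\<le>k. (fact k)\<^sup>2 * fps_nth P p * ((d n)\<^sup>2) ^ (k - p) / (fact (k - p))\<^sup>2)"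
    by (simp add: chi_moment_def P_def fps_mult_nth atLeast0AtMost sum_distrib_left mult.assoc)
  also have "\<dots> = (\<Sum>p\<le>k. real (k choose p) ^ 2 * d n ^ (2 * (k - p)) * chi_moment d n p)"
  proof (intro sum.cong refl)
    fix p
    assume "p \<in> {..k}"
    then have "(fact k :: real) = fact p * fact (k - p) * real (k choose p)"
      by (metis atMost_iff binomial_fact_lemma of_nat_fact of_nat_mult)
    then show "(fact k)\<^sup>2 * fps_nth P p * ((d n)\<^sup>2) ^ (k - p) / (fact (k - p))\<^sup>2
        = real (k choose p) ^ 2 * d n ^ (2 * (k - p)) * chi_moment d n p"
      by (simp add: chi_moment_def P_def power_mult power_mult_distrib)
  qed
  finally show ?thesis .
qed

section \<open>Time averages of mixed powers of chi\<close>

text \<open>The extra phase makes the family closed under adding one frequency (see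
  \<open>chi_mixed_power_Suc\<close>), which is what the inductions on \<open>n\<close> below need.\<close>

definition chi_mixed_power ::
    "nat \<Rightarrow> (nat \<Rightarrow> real) \<Rightarrow> (nat \<Rightarrow> real) \<Rightarrow> nat \<Rightarrow> nat \<Rightarrow> real \<Rightarrow> real \<Rightarrow> complex" where
  "chi_mixed_power n d E p q \<omega> t = chi n d E t ^ p * cnj (chi n d E t) ^ q * phase \<omega> t"

lemma continuous_on_chi_mixed_power [continuous_intros]:
  "continuous_on UNIV (chi_mixed_power n d E p q \<omega>)"
  unfolding chi_mixed_power_def by (intro continuous_intros)

lemma chi_mixed_power_diag:
  "chi_mixed_power n d E k k 0 t = complex_of_real (norm (chi n d E t) ^ (2 * k))"
proof -
  have "chi_mixed_power n d E k k 0 t = (chi n d E t * cnj (chi n d E t)) ^ k"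
    by (simp add: chi_mixed_power_def power_mult_distrib)
  also have "\<dots> = complex_of_real (norm (chi n d E t) ^ 2) ^ k"
    by (simp only: complex_norm_square)
  finally show ?thesis
    by (simp add: power_mult)
qed

lemma chi_mixed_power_Suc:
  "chi_mixed_power (Suc n) d E k l \<omega> t =
    (\<Sum>p\<le>k. \<Sum>q\<le>l. complex_of_real (real (k choose p) * real (l choose q) * d n ^ (k - p + (l - q)))
      * chi_mixed_power n d E p q (\<omega> + (real (l - q) - real (k - p)) * E n) t)"
proof -
  define X where "X = chi n d E t"
  define D where "D = complex_of_real (d n)"
  define a where "a = phase (- E n) t"
  have "chi_mixed_power (Suc n) d E k l \<omega> t = (X + D * a) ^ k * (cnj X + D * cnj a) ^ l * phase \<omega> t"
    by (simp add: chi_mixed_power_def chi_Suc X_def D_def a_def)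
  also have "\<dots> = (\<Sum>p\<le>k. \<Sum>q\<le>l. (of_nat (k choose p) * X ^ p * (D * a) ^ (k - p)) *
      (of_nat (l choose q) * cnj X ^ q * (D * cnj a) ^ (l - q)) * phase \<omega> t)"
    by (simp add: binomial_ring sum_distrib_left sum_distrib_right mult.assoc sum.swap[of _ "{..l}"])
  also have "\<dots> = (\<Sum>p\<le>k. \<Sum>q\<le>l. complex_of_real (real (k choose p) * real (l choose q) * d n ^ (k - p + (l - q)))
      * chi_mixed_power n d E p q (\<omega> + (real (l - q) - real (k - p)) * E n) t)"
  proof (intro sum.cong refl)
    fix p q
    have phases: "a ^ (k - p) * cnj a ^ (l - q) * phase \<omega> t = phase (\<omega> + (real (l - q) - real (k - p)) * E n) t"
      by (simp add: a_def cnj_phase phase_power phase_add algebra_simps)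
    then show "(of_nat (k choose p) * X ^ p * (D * a) ^ (k - p)) *
        (of_nat (l choose q) * cnj X ^ q * (D * cnj a) ^ (l - q)) * phase \<omega> t =
      complex_of_real (real (k choose p) * real (l choose q) * d n ^ (k - p + (l - q)))
        * chi_mixed_power n d E p q (\<omega> + (real (l - q) - real (k - p)) * E n) t"
      by (simp add: chi_mixed_power_def X_def D_def power_mult_distrib power_add mult_ac
          flip: phases)
  qed
  finally show ?thesis .
qed

lemma avg_T_chi_mixed_power_Suc:
  "avg_T (chi_mixed_power (Suc n) d E k l \<omega>) =
    (\<lambda>T. \<Sum>p\<le>k. \<Sum>q\<le>l. complex_of_real (real (k choose p) * real (l choose q) * d n ^ (k - p + (l - q)))
      * avg_T (chi_mixed_power n d E p q (\<omega> + (real (l - q) - real (k - p)) * E n)) T)"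
  by (simp add: ext[OF chi_mixed_power_Suc] fun_eq_iff avg_T_sum avg_T_mult_left continuous_intros)

lemma tendsto_avg_T_chi_mixed_power_zero:
  assumes "\<omega> \<notin> rat_span E n"
  shows "(avg_T (chi_mixed_power n d E p q \<omega>) \<longlongrightarrow> 0) at_top"
  using assms
proof (induction n arbitrary: p q \<omega>)
  case 0
  then have "\<omega> \<noteq> 0"
    by simp
  then show ?case
  proof (cases "p = 0 \<and> q = 0")
    case True
    with \<open>\<omega> \<noteq> 0\<close> show ?thesis
      using tendsto_avg_T_phase[of \<omega>] by (simp add: chi_mixed_power_def)
  next
    case False
    then have "chi_mixed_power 0 d E p q \<omega> = (\<lambda>t. 0)"
      by (auto simp: chi_mixed_power_def fun_eq_iff)
    then show ?thesis
      by (simp only: tendsto_avg_T_const)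
  qed
next
  case (Suc n)
  have "(real (l - q) - real (k - p)) \<in> \<rat>" for k l p q :: nat
    by simp
  with Suc show ?case
    unfolding avg_T_chi_mixed_power_Suc
    by (intro tendsto_null_sum tendsto_mult_right_zero Suc.IH) (blast intro: rat_span_SucI)
qed

lemma tendsto_avg_T_chi_mixed_power_diag:
  assumes "rat_independent n E"
  shows "(avg_T (chi_mixed_power n d E k k 0) \<longlongrightarrow> complex_of_real (chi_moment d n k)) at_top"
  using assms
proof (induction n arbitrary: k)
  case 0
  have "chi_mixed_power 0 d E k k 0 = (\<lambda>t. complex_of_real (chi_moment d 0 k))"
    by (simp add: chi_mixed_power_def chi_moment_0 fun_eq_iff)
  then show ?case
    by (simp only: tendsto_avg_T_const)
next
  case (Suc n)
  have term_limit: "(avg_T (chi_mixed_power n d E p q (0 + (real (k - q) - real (k - p)) * E n))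
      \<longlongrightarrow> (if p = q then complex_of_real (chi_moment d n p) else 0)) at_top"
    if "p \<le> k" "q \<le> k" for p q
  proof (cases "p = q")
    case True
    then show ?thesis
      using Suc.IH[OF rat_independent_SucD[OF Suc.prems]] by simp
  next
    case False
    with that have "real (k - q) - real (k - p) \<noteq> 0"
      by simp
    then have "0 + (real (k - q) - real (k - p)) * E n \<notin> rat_span E n"
      using rat_independent_not_in_rat_span[OF Suc.prems] by simp
    with False show ?thesis
      by (simp add: tendsto_avg_T_chi_mixed_power_zero)
  qed
  have "(avg_T (chi_mixed_power (Suc n) d E k k 0) \<longlongrightarrow>
      (\<Sum>p\<le>k. \<Sum>q\<le>k. complex_of_real (real (k choose p) * real (k choose q) * d n ^ (k - p + (k - q)))
        * (if p = q then complex_of_real (chi_moment d n p) else 0))) at_top"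
    unfolding avg_T_chi_mixed_power_Suc by (intro tendsto_sum tendsto_mult tendsto_const term_limit) auto
  also have "(\<Sum>p\<le>k. \<Sum>q\<le>k. complex_of_real (real (k choose p) * real (k choose q) * d n ^ (k - p + (k - q)))
        * (if p = q then complex_of_real (chi_moment d n p) else 0)) = complex_of_real (chi_moment d (Suc n) k)"
    by (simp add: chi_moment_Suc if_distrib[of "\<lambda>x. _ * x"] sum.delta mult_2 power2_eq_square
        cong: if_cong)
  finally show ?case .
qed

lemma tendsto_avg_T_norm_chi_power:
  assumes "rat_independent n E"
  shows "(avg_T (\<lambda>t. norm (chi n d E t) ^ (2 * k)) \<longlongrightarrow> chi_moment d n k) at_top"
proof -
  have "avg_T (chi_mixed_power n d E k k 0) = avg_T (\<lambda>t. complex_of_real (norm (chi n d E t) ^ (2 * k)))"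
    by (simp only: ext[OF chi_mixed_power_diag])
  also have "\<dots> = (\<lambda>T. complex_of_real (avg_T (\<lambda>t. norm (chi n d E t) ^ (2 * k)) T))"
    by (intro ext avg_T_of_real continuous_intros)
  finally have "avg_T (chi_mixed_power n d E k k 0) =
      (\<lambda>T. complex_of_real (avg_T (\<lambda>t. norm (chi n d E t) ^ (2 * k)) T))" .
  then show ?thesis
    using tendsto_avg_T_chi_mixed_power_diag[OF assms, of d k]
    by (simp add: tendsto_of_real_iff)
qed

section \<open>The Bessel series\<close>

lemma summable_norm_I0s_series: "summable (\<lambda>k. norm (w ^ k / (fact k)\<^sup>2 :: complex))"
proof (rule summable_comparison_test'[OF summable_exp[of "norm w"]])
  fix k :: nat
  have "norm w ^ k / (fact k)\<^sup>2 \<le> norm w ^ k / fact k"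
    by (rule divide_left_mono) (auto simp: power2_eq_square)
  then show "norm (norm (w ^ k / (fact k)\<^sup>2)) \<le> inverse (fact k) * norm w ^ k"
    by (simp add: norm_divide norm_power field_simps)
qed

lemma I0s_sums: "(\<lambda>k. w ^ k / (fact k)\<^sup>2) sums I0s w"
  unfolding I0s_def of_nat_fact by (rule summable_sums[OF summable_norm_cancel[OF summable_norm_I0s_series]])

lemma bessel_fps_sums:
  fixes z :: complex
  shows "summable (\<lambda>k. norm (complex_of_real (fps_nth (bessel_fps c) k) * z ^ k))"
    and "(\<lambda>k. complex_of_real (fps_nth (bessel_fps c) k) * z ^ k) sums I0s (complex_of_real c * z)"
proof -
  have "complex_of_real (fps_nth (bessel_fps c) k) * z ^ k = (complex_of_real c * z) ^ k / (fact k)\<^sup>2" for k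
    by (simp add: power_mult_distrib)
  then show "summable (\<lambda>k. norm (complex_of_real (fps_nth (bessel_fps c) k) * z ^ k))"
    and "(\<lambda>k. complex_of_real (fps_nth (bessel_fps c) k) * z ^ k) sums I0s (complex_of_real c * z)"
    by (simp_all add: summable_norm_I0s_series I0s_sums)
qed

lemma fps_mult_sums:
  fixes F G :: "real fps" and z :: complex
  assumes F: "summable (\<lambda>k. norm (complex_of_real (fps_nth F k) * z ^ k))"
      "(\<lambda>k. complex_of_real (fps_nth F k) * z ^ k) sums A"
    and G: "summable (\<lambda>k. norm (complex_of_real (fps_nth G k) * z ^ k))"
      "(\<lambda>k. complex_of_real (fps_nth G k) * z ^ k) sums B"
  shows "summable (\<lambda>k. norm (complex_of_real (fps_nth (F * G) k) * z ^ k))"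
    and "(\<lambda>k. complex_of_real (fps_nth (F * G) k) * z ^ k) sums (A * B)"
proof -
  define a where "a k = complex_of_real (fps_nth F k) * z ^ k" for k
  define b where "b k = complex_of_real (fps_nth G k) * z ^ k" for k
  have Cauchy: "complex_of_real (fps_nth (F * G) k) * z ^ k = (\<Sum>i\<le>k. a i * b (k - i))" for k
    unfolding fps_mult_nth atLeast0AtMost of_real_sum sum_distrib_right
  proof (intro sum.cong refl)
    fix i
    assume "i \<in> {..k}"
    then have "z ^ k = z ^ i * z ^ (k - i)"
      by (simp flip: power_add)
    then show "complex_of_real (fps_nth F i * fps_nth G (k - i)) * z ^ k = a i * b (k - i)"
      by (simp add: a_def b_def mult_ac)
  qed
  have "summable (\<lambda>k. \<Sum>i\<le>k. norm (a i) * norm (b (k - i)))"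
    using summable_Cauchy_product[of "\<lambda>k. norm (a k)" "\<lambda>k. norm (b k)"] F(1) G(1)
    by (simp add: a_def b_def)
  then show "summable (\<lambda>k. norm (complex_of_real (fps_nth (F * G) k) * z ^ k))"
    unfolding Cauchy
    by (rule summable_comparison_test'[where N = 0])
       (simp add: norm_mult order_trans[OF norm_sum] sum_mono)
  have "(\<lambda>k. \<Sum>i\<le>k. a i * b (k - i)) sums (suminf a * suminf b)"
    using F(1) G(1) unfolding a_def b_def by (rule Cauchy_product_sums)
  then show "(\<lambda>k. complex_of_real (fps_nth (F * G) k) * z ^ k) sums (A * B)"
    using F(2) G(2) unfolding Cauchy a_def b_def by (simp add: sums_iff)
qed

lemma prod_bessel_fps_sums:
  fixes c :: "nat \<Rightarrow> real" and z :: complex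
  shows "summable (\<lambda>k. norm (complex_of_real (fps_nth (\<Prod>i<n. bessel_fps (c i)) k) * z ^ k)) \<and>
    (\<lambda>k. complex_of_real (fps_nth (\<Prod>i<n. bessel_fps (c i)) k) * z ^ k)
      sums (\<Prod>i<n. I0s (complex_of_real (c i) * z))"
proof (induction n)
  case 0
  have "complex_of_real (fps_nth 1 k) * z ^ k = (if k = 0 then 1 else 0)" for k
    by simp
  moreover have "summable (\<lambda>k. norm (if k = 0 then 1 else 0 :: complex))"
    by (rule summable_finite[of "{0}"]) auto
  ultimately show ?case
    using sums_single[of 0 "\<lambda>_. 1 :: complex"] by simp
next
  case (Suc n)
  then show ?case
    using fps_mult_sums[OF conjunct1[OF Suc] conjunct2[OF Suc] bessel_fps_sums] by simp
qed

lemma chi_moment_series_sums: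
  "(\<lambda>k. complex_of_real (chi_moment d n k) / (fact k)\<^sup>2 * z ^ k)
    sums (\<Prod>i<n. I0s (complex_of_real ((d i)\<^sup>2) * z))"
proof -
  have "complex_of_real (chi_moment d n k) / (fact k)\<^sup>2 =
      complex_of_real (fps_nth (\<Prod>i<n. bessel_fps ((d i)\<^sup>2)) k)" for k
    by (simp add: chi_moment_def)
  then show ?thesis
    using conjunct2[OF prod_bessel_fps_sums[of "\<lambda>i. (d i)\<^sup>2" n z]] by simp
qed

lemma tendsto_avg_T_I0s_norm_chi:
  assumes "rat_independent n E"
  shows "(avg_T (\<lambda>t. I0s (complex_of_real ((norm (chi n d E t))\<^sup>2) * z))
    \<longlongrightarrow> (\<Prod>i<n. I0s (complex_of_real ((d i)\<^sup>2) * z))) at_top"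
proof -
  define u where "u k t = z ^ k / (fact k)\<^sup>2 * complex_of_real (norm (chi n d E t) ^ (2 * k))" for k t
  define D where "D = (\<Sum>j<n. \<bar>d j\<bar>)"
  have I0s_eq: "I0s (complex_of_real ((norm (chi n d E t))\<^sup>2) * z) = (\<Sum>k. u k t)" for t
    using I0s_sums[of "complex_of_real ((norm (chi n d E t))\<^sup>2) * z"]
    by (simp add: sums_iff u_def power_mult_distrib mult_ac flip: power_mult)
  have bound: "norm (u k t) \<le> norm ((complex_of_real (D\<^sup>2) * z) ^ k / (fact k)\<^sup>2)" for k t
  proof -
    have "norm (chi n d E t) ^ (2 * k) \<le> D ^ (2 * k)"
      unfolding D_def by (intro power_mono norm_chi_le) simp
    then have "norm (u k t) \<le> norm z ^ k * D ^ (2 * k) / (fact k)\<^sup>2"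
      by (simp add: u_def norm_mult norm_divide norm_power mult_left_mono divide_right_mono)
    also have "\<dots> = norm ((complex_of_real (D\<^sup>2) * z) ^ k / (fact k)\<^sup>2)"
      by (simp add: norm_mult norm_divide norm_power power_mult power_mult_distrib)
    finally show ?thesis .
  qed
  have lim: "(avg_T (u k) \<longlongrightarrow> z ^ k / (fact k)\<^sup>2 * complex_of_real (chi_moment d n k)) at_top" for k
  proof -
    have "continuous_on UNIV (\<lambda>t. norm (chi n d E t) ^ (2 * k))"
      by (intro continuous_intros)
    then have "avg_T (u k) =
        (\<lambda>T. z ^ k / (fact k)\<^sup>2 * complex_of_real (avg_T (\<lambda>t. norm (chi n d E t) ^ (2 * k)) T))"
      unfolding u_def by (intro ext) (simp only: avg_T_mult_left avg_T_of_real)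
    then show ?thesis
      by (simp only:) (intro tendsto_mult_left tendsto_of_real tendsto_avg_T_norm_chi_power[OF assms])
  qed
  have "continuous_on UNIV (u k)" for k
    unfolding u_def by (intro continuous_intros)
  then have "(avg_T (\<lambda>t. \<Sum>k. u k t)
      \<longlongrightarrow> (\<Sum>k. z ^ k / (fact k)\<^sup>2 * complex_of_real (chi_moment d n k))) at_top"
    by (rule tendsto_avg_T_suminf[OF _ bound summable_norm_I0s_series lim])
  moreover have "(\<Sum>k. z ^ k / (fact k)\<^sup>2 * complex_of_real (chi_moment d n k)) =
      (\<Prod>i<n. I0s (complex_of_real ((d i)\<^sup>2) * z))"
    using chi_moment_series_sums[of d n z] by (simp add: sums_iff mult_ac)
  ultimately show ?thesis
    unfolding I0s_eq by simp
qed

section \<open>Formal logarithms and cumulants\<close>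

lemma fps_log_nth_0 [simp]: "fps_nth (fps_log M) 0 = 0"
  by (simp add: fps_log_def)

lemma fps_log_1 [simp]: "fps_log 1 = 0"
  by (simp add: fps_log_def)

lemma fps_deriv_fps_log:
  assumes "fps_nth M 0 = 1"
  shows "fps_deriv (fps_log M) = fps_deriv M * inverse M"
proof -
  have M1: "fps_nth (M - 1) 0 = 0"
    using assms by simp
  have "fps_deriv (fps_log M) = (inverse (1 + fps_X) oo (M - 1)) * fps_deriv M"
    unfolding fps_log_def by (simp add: fps_compose_deriv[OF M1] fps_ln_deriv)
  also have "inverse (1 + fps_X) oo (M - 1) = inverse ((1 + fps_X) oo (M - 1))"
    by (rule fps_inverse_compose[OF M1]) simp
  also have "(1 + fps_X) oo (M - 1) = M"
    using M1 by (simp add: fps_compose_add_distrib)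
  finally show ?thesis
    by (simp add: mult.commute)
qed

lemma fps_log_mult:
  assumes "fps_nth M 0 = 1" "fps_nth A 0 = 1"
  shows "fps_log (M * A) = fps_log M + fps_log A"
proof -
  have inverse: "M * inverse M = 1" "A * inverse A = 1"
    using assms by (simp_all add: inverse_mult_eq_1')
  have "fps_deriv (fps_log (M * A)) = (fps_deriv M * A + M * fps_deriv A) * (inverse M * inverse A)"
    using assms by (simp add: fps_deriv_fps_log fps_inverse_mult)
  also have "\<dots> = fps_deriv M * inverse M * (A * inverse A) + fps_deriv A * inverse A * (M * inverse M)"
    by (simp add: algebra_simps)
  also have "\<dots> = fps_deriv (fps_log M + fps_log A)"
    using assms inverse by (simp add: fps_deriv_fps_log)
  finally show ?thesis
    unfolding fps_deriv_eq_iff by simp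
qed

lemma fps_log_prod:
  assumes "\<And>i. i \<in> A \<Longrightarrow> fps_nth (F i) 0 = 1"
  shows "fps_log (\<Prod>i\<in>A. F i) = (\<Sum>i\<in>A. fps_log (F i))"
  using assms
  by (induction A rule: infinite_finite_induct) (auto simp: fps_log_mult fps_nth_prod_0)

lemma fps_log_compose_scale:
  assumes "fps_nth A 0 = 1"
  shows "fps_log (A oo (fps_const c * fps_X)) = fps_log A oo (fps_const c * fps_X)"
proof -
  have "(A oo (fps_const c * fps_X)) - 1 = (A - 1) oo (fps_const c * fps_X)"
    by (simp add: fps_compose_sub_distrib)
  then show ?thesis
    unfolding fps_log_def by (simp add: fps_compose_assoc assms)
qed

lemma fps_log_bessel_fps_nth:
  "fps_nth (fps_log (bessel_fps c)) n = c ^ n * fps_nth (fps_log (bessel_fps 1)) n"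
proof -
  have "bessel_fps c = bessel_fps 1 oo (fps_const c * fps_X)"
    by (simp add: bessel_fps_def fps_compose_linear fps_eq_iff)
  then have "fps_log (bessel_fps c) = fps_log (bessel_fps 1) oo (fps_const c * fps_X)"
    by (simp add: fps_log_compose_scale bessel_fps_def)
  then show ?thesis
    by (simp add: fps_compose_linear)
qed

lemma cumulant_chi_moment:
  "cumulant (\<lambda>k. chi_moment d n k / fact k) m = a_coef m * (\<Sum>i<n. d i ^ (2 * m))"
proof -
  have "Abs_fps (\<lambda>k. chi_moment d n k / fact k / fact k) = (\<Prod>i<n. bessel_fps ((d i)\<^sup>2))"
    by (simp add: fps_eq_iff chi_moment_def power2_eq_square)
  then have "cumulant (\<lambda>k. chi_moment d n k / fact k) m =
      fact m * fps_nth (fps_log (\<Prod>i<n. bessel_fps ((d i)\<^sup>2))) m"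
    by (simp add: cumulant_def)
  also have "\<dots> = fact m * (\<Sum>i<n. fps_nth (fps_log (bessel_fps ((d i)\<^sup>2))) m)"
    by (simp add: fps_log_prod fps_sum_nth)
  also have "\<dots> = fact m * (\<Sum>i<n. ((d i)\<^sup>2) ^ m * fps_nth (fps_log (bessel_fps 1)) m)"
    by (intro arg_cong[where f = "\<lambda>x. fact m * x"] sum.cong refl fps_log_bessel_fps_nth)
  also have "\<dots> = fact m * fps_nth (fps_log (bessel_fps 1)) m * (\<Sum>i<n. d i ^ (2 * m))"
    by (simp add: sum_distrib_left mult_ac flip: power_mult power_mult_distrib)
  also have "Abs_fps (\<lambda>k. 1 / (fact k)\<^sup>2) = bessel_fps 1"
    by (simp add: bessel_fps_def)
  then have "fact m * fps_nth (fps_log (bessel_fps 1)) m = a_coef m"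
    by (simp add: a_coef_def)
  finally show ?thesis .
qed

theorem mainTheorem8:
  fixes N :: nat and E d :: "nat \<Rightarrow> real"
  assumes linindep: "\<And>q :: nat \<Rightarrow> rat. (\<Sum>j<N. of_rat (q j) * E j) = 0 \<Longrightarrow> (\<forall>j<N. q j = 0)"
      and dpos: "\<And>j. j < N \<Longrightarrow> d j > 0"
  defines "I \<equiv> (\<lambda>k::nat. time_avg (\<lambda>t. cmod (chi N d E t) ^ (2 * k)))"
  shows "(\<forall>k. (avg_T (\<lambda>t. cmod (chi N d E t) ^ (2 * k)) \<longlongrightarrow> I k) at_top)
    \<and> I 0 = 1
    \<and> (\<forall>z::complex.
         (\<lambda>k. complex_of_real (I k) / (of_nat (fact k))\<^sup>2 * z ^ k) sums (\<Prod>i<N. I0s (complex_of_real ((d i)\<^sup>2) * z))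
       \<and> (avg_T (\<lambda>t. I0s (complex_of_real ((cmod (chi N d E t))\<^sup>2) * z))
            \<longlongrightarrow> (\<Prod>i<N. I0s (complex_of_real ((d i)\<^sup>2) * z))) at_top)
    \<and> (\<forall>n\<ge>1. cumulant (\<lambda>k. I k / fact k) n = a_coef n * (\<Sum>i<N. d i ^ (2 * n)))"
proof -
  have indep: "rat_independent N E"
    using linindep unfolding rat_independent_def by blast
  have I: "I = chi_moment d N"
    unfolding I_def time_avg_def
    by (intro ext tendsto_Lim trivial_limit_at_top_linorder tendsto_avg_T_norm_chi_power[OF indep])
  show ?thesis
    unfolding I
    using tendsto_avg_T_norm_chi_power[OF indep] chi_moment_series_sums
      tendsto_avg_T_I0s_norm_chi[OF indep] cumulant_chi_moment
    by simp
qed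

end
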